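(* Let $I$ be an instance of OWA-k-Median with facilities $\mathcal{F}$, clients $D_1,\dots,D_n$, costs $c_{ij}$, integer $k$, and non-increasing nonnegative rational weights $w_\ell=p_\ell/q_\ell$ (in lowest terms), $\ell\in[k]$. Let $Q=\prod_{r=1}^k q_r$ and construct the instance $I'$ of Fault-Tolerant $k$-Median with Multiplicities with the same facilities, same $k$, and in which each client $D_j$ is replaced by clients $D_{j,1},\dots,D_{j,k}$ located where $D_j$ is (i.e., with the same costs $c_{i,(j,\ell)}=c_{ij}$), where $D_{j,\ell}$ has connectivity requirement $\ell$ and multiplicity $m_{j,\ell}=(w_\ell-w_{\ell+1})Q$ for $\ell\in[k-1]$ and $m_{j,k}=w_kQ$. Then for every $\alpha\ge1$, every $\alpha$-approximate solution to $I'$ is an $\alpha$-approximate solution to $I$.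
   Context: OWA-k-Median: for a $k$-set $C$ of facilities and client $D_j$, let $c^{\rightarrow}_1(C,j)\le\dots\le c^{\rightarrow}_k(C,j)$ be the costs $\{c_{ij}:F_i\in C\}$ in non-decreasing order; the objective is to minimize $\sum_{j}\sum_{i=1}^k w_i c^{\rightarrow}_i(C,j)$ over $k$-sets $C$. Fault-Tolerant $k$-Median with Multiplicities: clients $D'$ with requirements $r\in[k]$ and multiplicities $m\in\mathbb{N}$; a $k$-set $C$ of facilities has cost $\sum_{D'} m_{D'}\cdot(\text{sum of costs of the } r_{D'} \text{ facilities of } C \text{ closest to } D')$, to be minimized. A solution is $\alpha$-approximate if its cost is at most $\alpha$ times the optimum. *)

theory Defs
  imports Complex_Main "HOL-Library.Multiset"
begin

definition sorted_costs :: "('f \<Rightarrow> 'c \<Rightarrow> real) \<Rightarrow> 'f set \<Rightarrow> 'c \<Rightarrow> real list" where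
  "sorted_costs c C j = sorted_list_of_multiset (image_mset (\<lambda>i. c i j) (mset_set C))"

definition owa_cost :: "('f \<Rightarrow> 'c \<Rightarrow> real) \<Rightarrow> 'c set \<Rightarrow> nat \<Rightarrow> (nat \<Rightarrow> real) \<Rightarrow> 'f set \<Rightarrow> real" where
  "owa_cost c D k w C = (\<Sum>j\<in>D. \<Sum>l=1..k. w l * (sorted_costs c C j ! (l - 1)))"

definition ftm_cost :: "('f \<Rightarrow> 'c \<Rightarrow> real) \<Rightarrow> 'c set \<Rightarrow> ('c \<Rightarrow> nat) \<Rightarrow> ('c \<Rightarrow> real) \<Rightarrow> 'f set \<Rightarrow> real" where
  "ftm_cost c D r m C = (\<Sum>d\<in>D. m d * sum_list (take (r d) (sorted_costs c C d)))"

definition is_approx :: "('f set \<Rightarrow> real) \<Rightarrow> 'f set \<Rightarrow> nat \<Rightarrow> real \<Rightarrow> 'f set \<Rightarrow> bool" where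
  "is_approx cost F k \<alpha> C \<longleftrightarrow> C \<subseteq> F \<and> card C = k \<and>
     (\<forall>C'. C' \<subseteq> F \<and> card C' = k \<longrightarrow> cost C \<le> \<alpha> * cost C')"

end

theory Submission
  imports Defs
begin

text \<open>Let S_l be the sum of the l smallest costs of a client, so that its l-th smallest
  cost is S_l - S_(l-1). Summation by parts turns the OWA cost
  w_1 c_1 + ... + w_k c_k into (w_1 - w_2) S_1 + ... + (w_(k-1) - w_k) S_(k-1) + w_k S_k,
  which after scaling by Q is exactly what the k copies of the client contribute to the
  fault-tolerant objective. Hence the two objectives differ by the positive factor Q on
  every k-set of facilities, and approximation ratios carry over.\<close>

lemma sum_weighted_prefix_sums:
  fixes w s :: "nat \<Rightarrow> 'a::comm_ring"
  shows "(\<Sum>l=1..<n. (w l - w (l + 1)) * (\<Sum>t<l. s t)) + w n * (\<Sum>t<n. s t)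
         = (\<Sum>l=1..n. w l * s (l - 1))"
proof (induction n)
  case 0
  then show ?case by simp
next
  case (Suc n)
  have "(\<Sum>l=1..<Suc n. (w l - w (l + 1)) * (\<Sum>t<l. s t))
        = (\<Sum>l=1..<n. (w l - w (l + 1)) * (\<Sum>t<l. s t)) + (w n - w (n + 1)) * (\<Sum>t<n. s t)"
    by (cases n) auto
  then show ?case
    using Suc.IH by (simp add: algebra_simps)
qed

lemma sum_list_take_eq_sum_nth:
  assumes "l \<le> length xs"
  shows "sum_list (take l xs) = (\<Sum>t<l. xs ! t)"
  using assms by (simp add: sum_list_sum_nth min_absorb1 atLeast0LessThan)

lemma owa_sum_eq_sum_prefix_sums:
  fixes w :: "nat \<Rightarrow> real"
  assumes "length xs = k"
  shows "(\<Sum>l=1..k. (if l < k then w l - w (l + 1) else w k) * sum_list (take l xs))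
         = (\<Sum>l=1..k. w l * xs ! (l - 1))"
proof (cases "k = 0")
  case False
  then have split: "{1..k} = insert k {1..<k}" by auto
  have "(\<Sum>l=1..k. (if l < k then w l - w (l + 1) else w k) * sum_list (take l xs))
        = (\<Sum>l=1..<k. (w l - w (l + 1)) * (\<Sum>t<l. xs ! t)) + w k * (\<Sum>t<k. xs ! t)"
    unfolding split using assms
    by (simp add: sum_list_take_eq_sum_nth sum_list_sum_nth atLeast0LessThan)
  also have "\<dots> = (\<Sum>l=1..k. w l * xs ! (l - 1))"
    by (rule sum_weighted_prefix_sums)
  finally show ?thesis .
qed simp

lemma length_sorted_costs: "length (sorted_costs c C j) = card C"
  unfolding sorted_costs_def
  by (metis mset_sorted_list_of_multiset size_mset size_image_mset size_mset_set)

lemma ftm_cost_split_clients: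
  fixes c :: "'f \<Rightarrow> 'c \<Rightarrow> real" and w :: "nat \<Rightarrow> real" and Q :: real
  assumes "card C = k"
  shows "ftm_cost (\<lambda>i (j, l). c i j) (D \<times> {1..k}) (\<lambda>(j, l). l)
           (\<lambda>(j, l). if l < k then (w l - w (l + 1)) * Q else w k * Q) C
         = Q * owa_cost c D k w C"
proof -
  have copies: "sorted_costs (\<lambda>i (j, l). c i j) C (j, l) = sorted_costs c C j" for j l
    unfolding sorted_costs_def by simp
  have "ftm_cost (\<lambda>i (j, l). c i j) (D \<times> {1..k}) (\<lambda>(j, l). l)
          (\<lambda>(j, l). if l < k then (w l - w (l + 1)) * Q else w k * Q) C
        = (\<Sum>j\<in>D. Q * (\<Sum>l=1..k. (if l < k then w l - w (l + 1) else w k)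
                                       * sum_list (take l (sorted_costs c C j))))"
    unfolding ftm_cost_def sum.cartesian_product' sum_distrib_left
    by (auto intro!: sum.cong simp: copies)
  also have "\<dots> = (\<Sum>j\<in>D. Q * (\<Sum>l=1..k. w l * sorted_costs c C j ! (l - 1)))"
    using assms
    by (intro sum.cong refl arg_cong[where f = "(*) Q"] owa_sum_eq_sum_prefix_sums)
       (simp add: length_sorted_costs)
  also have "\<dots> = Q * owa_cost c D k w C"
    by (simp add: owa_cost_def sum_distrib_left)
  finally show ?thesis .
qed

lemma is_approx_scaled_cost:
  assumes "0 < a" and "\<And>C'. card C' = k \<Longrightarrow> f C' = a * g C'"
    and "is_approx f F k \<alpha> C"
  shows "is_approx g F k \<alpha> C"
  unfolding is_approx_def
proof (intro conjI allI impI)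
  show C: "C \<subseteq> F" "card C = k"
    using assms(3) unfolding is_approx_def by auto
  fix C' assume C': "C' \<subseteq> F \<and> card C' = k"
  then have "a * g C \<le> a * (\<alpha> * g C')"
    using assms C unfolding is_approx_def by (simp add: algebra_simps)
  then show "g C \<le> \<alpha> * g C'"
    using assms(1) by simp
qed

theorem lemma3:
  fixes F :: "'f set" and D :: "'c set" and c :: "'f \<Rightarrow> 'c \<Rightarrow> real"
    and k :: nat and p q :: "nat \<Rightarrow> nat" and w :: "nat \<Rightarrow> real"
    and Q :: nat and \<alpha> :: real and C :: "'f set"
  assumes "finite F" and "finite D"
    and "1 \<le> k" and "k \<le> card F"
    and "\<And>l. l \<in> {1..k} \<Longrightarrow> q l > 0 \<and> coprime (p l) (q l)"
    and "\<And>l. l \<in> {1..k} \<Longrightarrow> w l = real (p l) / real (q l)"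
    and "\<And>l. l \<in> {1..<k} \<Longrightarrow> w (l + 1) \<le> w l"
    and "Q = (\<Prod>r=1..k. q r)"
    and "\<alpha> \<ge> 1"
    and "is_approx
           (ftm_cost (\<lambda>i (j, l). c i j) (D \<times> {1..k}) (\<lambda>(j, l). l)
              (\<lambda>(j, l). if l < k then (w l - w (l + 1)) * real Q else w k * real Q))
           F k \<alpha> C"
  shows "is_approx (owa_cost c D k w) F k \<alpha> C"
proof (rule is_approx_scaled_cost)
  show "0 < real Q"
    using assms(5,8) by (auto intro!: prod_pos)
  show "ftm_cost (\<lambda>i (j, l). c i j) (D \<times> {1..k}) (\<lambda>(j, l). l)
          (\<lambda>(j, l). if l < k then (w l - w (l + 1)) * real Q else w k * real Q) C'
        = real Q * owa_cost c D k w C'" if "card C' = k" for C'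
    using that by (rule ftm_cost_split_clients)
qed (use assms(10) in simp)

end
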